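(* Let $X\subseteq\mathbb{C}^n$ be a complex analytic variety with coordinates $z_1,\dots,z_n$, $x\in X$, $M$ an $\mathcal{O}_{X,x}$-submodule of $\mathcal{O}_{X,x}^p$ with matrix of generators $[M]=[g_1\cdots g_r]$, and $k\in\mathbb{N}$. Let $[M_D]=\begin{bmatrix}[M] & 0\\ [M]' & [\tilde M]\end{bmatrix}$, where $[\tilde M]$ is the $p\times nr$ matrix with columns $(z_i-z_i')g_j'$, $i=1,\dots,n$, $j=1,\dots,r$. Let $\mathcal{I}_{2k}(M_D)$ be the ideal of $\mathcal{O}_{X\times X,(x,x)}$ generated by $\{\det(M_{IJ})\det(\tilde M_{KL}): I,J,K,L\text{ are }k\text{-indexes}\}$. Then $\mathcal{I}_{2k}(M_D)\subseteq I_\Delta^{k-1}\,I_2((I_k(M))_D)$.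
   Context: $\pi_1,\pi_2:X\times X\to X$ are projections; for an object $A$ on $X$, $A$ also denotes $A\circ\pi_1$ and $A'$ denotes $A\circ\pi_2$. The matrix $[M_D]$ above is a matrix of generators of $M_D$, the submodule of $\mathcal{O}_{X\times X,(x,x)}^{2p}$ generated by $h_D=(h\circ\pi_1,h\circ\pi_2)$, $h\in M$. For a matrix $A$ and $k$-indexes $I,J$, $A_{IJ}$ is the submatrix with rows $I$ and columns $J$. $I_\Delta$ is the ideal generated by $z_i-z_i'$, $i=1,\dots,n$. $I_k(M)$ is the ideal of $k\times k$ minors of $[M]$, $(I_k(M))_D\subseteq\mathcal{O}^2_{X\times X,(x,x)}$ is generated by $(f\circ\pi_1,f\circ\pi_2)$, $f\in I_k(M)$, and $I_2(\cdot)$ denotes the ideal of $2\times 2$ minors. *)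

theory Defs
  imports "HOL-Analysis.Analysis"
begin

text \<open>Holomorphy on an open set U of a finite-dimensional complex vector space, given by a
complex scalar action sc: complex Frechet differentiability at every point
(real derivative that is complex linear).\<close>
definition cholo :: "(complex \<Rightarrow> 'a \<Rightarrow> 'a) \<Rightarrow> ('a::real_normed_vector \<Rightarrow> complex) \<Rightarrow> 'a set \<Rightarrow> bool" where
  "cholo sc f U \<longleftrightarrow> (\<forall>z\<in>U. \<exists>L. (f has_derivative L) (at z) \<and> (\<forall>c v. L (sc c v) = c * L v))"

definition sc_vec :: "complex \<Rightarrow> complex^'n \<Rightarrow> complex^'n" where
  "sc_vec c v = c *s v"

definition sc_pair :: "complex \<Rightarrow> (complex^'n) \<times> (complex^'n) \<Rightarrow> (complex^'n) \<times> (complex^'n)" where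
  "sc_pair c w = (c *s fst w, c *s snd w)"

definition analytic_variety :: "(complex^'n) set \<Rightarrow> bool" where
  "analytic_variety X \<longleftrightarrow> (\<forall>a\<in>X. \<exists>U fs. open U \<and> a \<in> U \<and> finite fs \<and>
      (\<forall>f\<in>fs. cholo sc_vec f U) \<and> X \<inter> U = {z\<in>U. \<forall>f\<in>fs. f z = 0})"

text \<open>f represents an element of the local ring O_{S,a}: it agrees on S near a with a holomorphic function.\<close>
definition is_germ :: "(complex \<Rightarrow> 'a \<Rightarrow> 'a) \<Rightarrow> 'a::real_normed_vector set \<Rightarrow> 'a \<Rightarrow> ('a \<Rightarrow> complex) \<Rightarrow> bool" where
  "is_germ sc S a f \<longleftrightarrow> (\<exists>U F. open U \<and> a \<in> U \<and> cholo sc F U \<and> (\<forall>y\<in>S \<inter> U. f y = F y))"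

text \<open>The ideal of O_{S,a} generated by a set G of germs (as a set of representatives,
closed under equality of germs).\<close>
definition gen_ideal :: "(complex \<Rightarrow> 'a \<Rightarrow> 'a) \<Rightarrow> 'a::real_normed_vector set \<Rightarrow> 'a \<Rightarrow> ('a \<Rightarrow> complex) set \<Rightarrow> ('a \<Rightarrow> complex) set" where
  "gen_ideal sc S a G = {h. \<exists>T c. finite T \<and> T \<subseteq> G \<and> (\<forall>t\<in>T. is_germ sc S a (c t)) \<and>
      (\<exists>U. open U \<and> a \<in> U \<and> (\<forall>y\<in>S \<inter> U. h y = (\<Sum>t\<in>T. c t y * t y)))}"

definition enum_set :: "'a set \<Rightarrow> 'a list" where
  "enum_set S = (SOME xs. distinct xs \<and> set xs = S)"

text \<open>Minor of a matrix with rows I and columns J (in a fixed order), via the Leibniz formula.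
The ordering only affects the sign, hence not the ideals generated by minors.\<close>
definition minor :: "('r \<Rightarrow> 'c \<Rightarrow> 'e::comm_ring_1) \<Rightarrow> 'r set \<Rightarrow> 'c set \<Rightarrow> 'e" where
  "minor A I J = (let is = enum_set I; js = enum_set J; m = length is in
     (\<Sum>\<sigma> | \<sigma> permutes {..<m}. of_int (sign \<sigma>) * (\<Prod>a<m. A (is ! a) (js ! (\<sigma> a)))))"

definition kidx :: "nat \<Rightarrow> 'a set \<Rightarrow> 'a set set" where
  "kidx k A = {I. I \<subseteq> A \<and> card I = k}"

text \<open>[M] is given by g a j (row a < p, column j < r), entries in O_{X,x}.
I_k(M): ideal of O_{X,x} generated by the k x k minors of [M].\<close>
definition Ik :: "(complex^'n) set \<Rightarrow> complex^'n \<Rightarrow> nat \<Rightarrow> nat \<Rightarrow> (nat \<Rightarrow> nat \<Rightarrow> complex^'n \<Rightarrow> complex) \<Rightarrow> nat \<Rightarrow> (complex^'n \<Rightarrow> complex) set" where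
  "Ik X x p r g k = gen_ideal sc_vec X x
     {(\<lambda>z. minor (\<lambda>a j. g a j z) I J) | I J. I \<in> kidx k {..<p} \<and> J \<in> kidx k {..<r}}"

definition Mtilde :: "(nat \<Rightarrow> nat \<Rightarrow> complex^'n \<Rightarrow> complex) \<Rightarrow> nat \<Rightarrow> 'n \<times> nat \<Rightarrow> (complex^'n) \<times> (complex^'n) \<Rightarrow> complex" where
  "Mtilde g a c w = (fst w $ fst c - snd w $ fst c) * g a (snd c) (snd w)"

definition I2k_MD :: "(complex^'n) set \<Rightarrow> complex^'n \<Rightarrow> nat \<Rightarrow> nat \<Rightarrow> (nat \<Rightarrow> nat \<Rightarrow> complex^'n \<Rightarrow> complex) \<Rightarrow> nat \<Rightarrow> ((complex^'n) \<times> (complex^'n) \<Rightarrow> complex) set" where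
  "I2k_MD X x p r g k = gen_ideal sc_pair (X \<times> X) (x, x)
     {(\<lambda>w. minor (\<lambda>a j. g a j (fst w)) I J * minor (\<lambda>a c. Mtilde g a c w) K L) | I J K L.
        I \<in> kidx k {..<p} \<and> J \<in> kidx k {..<r} \<and> K \<in> kidx k {..<p} \<and> L \<in> kidx k (UNIV \<times> {..<r})}"

text \<open>I_\<Delta>^{m} I_2(N_D) where N is an ideal of O_{X,x}: generated by the products of m generators
z_i - z_i' of I_\<Delta> with the 2x2 minors f h' - f' h of the generators (f,f'), (h,h') of N_D.\<close>
definition IDelta_pow_I2 :: "(complex^'n) set \<Rightarrow> complex^'n \<Rightarrow> nat \<Rightarrow> (complex^'n \<Rightarrow> complex) set \<Rightarrow> ((complex^'n) \<times> (complex^'n) \<Rightarrow> complex) set" where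
  "IDelta_pow_I2 X x m N = gen_ideal sc_pair (X \<times> X) (x, x)
     {(\<lambda>w. (\<Prod>t<m. fst w $ \<phi> t - snd w $ \<phi> t) * (f (fst w) * h (snd w) - f (snd w) * h (fst w))) | \<phi> f h.
        f \<in> N \<and> h \<in> N}"

end

theory Submission
  imports Defs
begin

text \<open>Each column (i, j) of [M~] is (z_i - z_i') times the column g_j', so the minor of [M~] on
rows K and columns L is the product of the k differences z_i - z_i' over L times a k-minor of [M]'
(up to sign; it vanishes when two columns of L share the generator index j). A generator of
I_2k(M_D) is therefore P (z_i - z_i') m h' with P a product of k - 1 differences and m, h in I_k(M).
The remaining difference is absorbed by the identity, with a = z_i,
  2 (a - a') m h' = ((a m) h' - (a m)' h) - (m (a h)' - m' (a h)) + (a - a') (m h' - m' h),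
whose three brackets are 2 x 2 minors of (I_k(M))_D since a m and a h lie in I_k(M).\<close>

lemma cholo_subset: "cholo sc F U \<Longrightarrow> V \<subseteq> U \<Longrightarrow> cholo sc F V"
  unfolding cholo_def by blast

lemma cholo_add:
  assumes "cholo sc F U" "cholo sc G U"
  shows "cholo sc (\<lambda>y. F y + G y) U"
  unfolding cholo_def
proof
  fix z assume "z \<in> U"
  then obtain L1 L2 where "(F has_derivative L1) (at z)" "\<forall>c v. L1 (sc c v) = c * L1 v"
    "(G has_derivative L2) (at z)" "\<forall>c v. L2 (sc c v) = c * L2 v"
    using assms unfolding cholo_def by meson
  then show "\<exists>L. ((\<lambda>y. F y + G y) has_derivative L) (at z) \<and> (\<forall>c v. L (sc c v) = c * L v)"
    by (intro exI[of _ "\<lambda>v. L1 v + L2 v"]) (auto intro: has_derivative_add simp: algebra_simps)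
qed

lemma cholo_mult:
  assumes "cholo sc F U" "cholo sc G U"
  shows "cholo sc (\<lambda>y. F y * G y) U"
  unfolding cholo_def
proof
  fix z assume "z \<in> U"
  then obtain L1 L2 where "(F has_derivative L1) (at z)" "\<forall>c v. L1 (sc c v) = c * L1 v"
    "(G has_derivative L2) (at z)" "\<forall>c v. L2 (sc c v) = c * L2 v"
    using assms unfolding cholo_def by meson
  then show "\<exists>L. ((\<lambda>y. F y * G y) has_derivative L) (at z) \<and> (\<forall>c v. L (sc c v) = c * L v)"
    by (intro exI[of _ "\<lambda>v. F z * L2 v + L1 v * G z"] conjI has_derivative_mult)
      (simp_all add: algebra_simps)
qed

lemma is_germ_combine:
  assumes "\<And>F G U. cholo sc F U \<Longrightarrow> cholo sc G U \<Longrightarrow> cholo sc (\<lambda>y. bop (F y) (G y)) U"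
    and "is_germ sc S a f" "is_germ sc S a g"
  shows "is_germ sc S a (\<lambda>y. bop (f y) (g y))"
proof -
  obtain U1 F1 U2 F2 where "open U1" "a \<in> U1" "cholo sc F1 U1" "\<forall>y\<in>S \<inter> U1. f y = F1 y"
    "open U2" "a \<in> U2" "cholo sc F2 U2" "\<forall>y\<in>S \<inter> U2. g y = F2 y"
    using assms(2,3) unfolding is_germ_def by meson
  then show ?thesis
    unfolding is_germ_def
    by (intro exI[of _ "U1 \<inter> U2"] exI[of _ "\<lambda>y. bop (F1 y) (F2 y)"])
      (auto intro: assms(1) cholo_subset)
qed

lemmas is_germ_add = is_germ_combine[OF cholo_add]
lemmas is_germ_mult = is_germ_combine[OF cholo_mult]

lemma is_germ_const: "is_germ sc S a (\<lambda>_. c)"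
  unfolding is_germ_def cholo_def
  by (intro exI[of _ UNIV] exI[of _ "\<lambda>_. c"]) (auto intro!: exI[of _ "\<lambda>_. 0"])

lemma is_germ_linear:
  assumes "bounded_linear L" "\<forall>c v. L (sc c v) = c * L v"
  shows "is_germ sc S a L"
  unfolding is_germ_def cholo_def
  using assms bounded_linear_imp_has_derivative by (intro exI[of _ UNIV] exI[of _ L]) blast

lemma is_germ_coordinate: "is_germ sc_vec S a (\<lambda>z. z $ i)"
  by (rule is_germ_linear) (auto intro: bounded_linear_vec_nth simp: sc_vec_def)

lemma is_germ_coordinate_diff: "is_germ sc_pair S a (\<lambda>w. fst w $ i - snd w $ i)"
  by (rule is_germ_linear)
    (auto intro!: bounded_linear_sub bounded_linear_compose[OF bounded_linear_vec_nth]
      bounded_linear_fst bounded_linear_snd simp: sc_pair_def algebra_simps)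

lemma gen_ideal_zero: "(\<lambda>_. 0) \<in> gen_ideal sc S a G"
  unfolding gen_ideal_def by (rule CollectI, rule exI[of _ "{}"]) (auto intro: exI[of _ UNIV])

lemma gen_ideal_generator: "t \<in> G \<Longrightarrow> t \<in> gen_ideal sc S a G"
  unfolding gen_ideal_def
  by (rule CollectI, rule exI[of _ "{t}"], rule exI[of _ "\<lambda>_ _. 1"])
    (auto intro: exI[of _ UNIV] is_germ_const)

lemma gen_ideal_local_cong:
  assumes "h \<in> gen_ideal sc S a G" "open U" "a \<in> U" "\<forall>y\<in>S \<inter> U. h' y = h y"
  shows "h' \<in> gen_ideal sc S a G"
proof -
  obtain T c V where "finite T" "T \<subseteq> G" "\<forall>t\<in>T. is_germ sc S a (c t)"
    "open V" "a \<in> V" "\<forall>y\<in>S \<inter> V. h y = (\<Sum>t\<in>T. c t y * t y)"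
    using assms(1) unfolding gen_ideal_def by blast
  with assms(2-4) show ?thesis
    unfolding gen_ideal_def by (intro CollectI exI[of _ T] exI[of _ c] conjI exI[of _ "U \<inter> V"]) auto
qed

lemma gen_ideal_mult:
  assumes "is_germ sc S a q" "h \<in> gen_ideal sc S a G"
  shows "(\<lambda>y. q y * h y) \<in> gen_ideal sc S a G"
proof -
  obtain T c U where "finite T" "T \<subseteq> G" "\<forall>t\<in>T. is_germ sc S a (c t)"
    "open U" "a \<in> U" "\<forall>y\<in>S \<inter> U. h y = (\<Sum>t\<in>T. c t y * t y)"
    using assms(2) unfolding gen_ideal_def by blast
  with assms(1) show ?thesis
    unfolding gen_ideal_def
    by (intro CollectI exI[of _ T] exI[of _ "\<lambda>t y. q y * c t y"] conjI exI[of _ U])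
      (auto intro: is_germ_mult simp: sum_distrib_left mult.assoc)
qed

lemma gen_ideal_add:
  assumes "h1 \<in> gen_ideal sc S a G" "h2 \<in> gen_ideal sc S a G"
  shows "(\<lambda>y. h1 y + h2 y) \<in> gen_ideal sc S a G"
proof -
  obtain T1 c1 U1 where T1: "finite T1" "T1 \<subseteq> G" "\<forall>t\<in>T1. is_germ sc S a (c1 t)"
    "open U1" "a \<in> U1" "\<forall>y\<in>S \<inter> U1. h1 y = (\<Sum>t\<in>T1. c1 t y * t y)"
    using assms(1) unfolding gen_ideal_def by blast
  obtain T2 c2 U2 where T2: "finite T2" "T2 \<subseteq> G" "\<forall>t\<in>T2. is_germ sc S a (c2 t)"
    "open U2" "a \<in> U2" "\<forall>y\<in>S \<inter> U2. h2 y = (\<Sum>t\<in>T2. c2 t y * t y)"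
    using assms(2) unfolding gen_ideal_def by blast
  define c where "c t y = (if t \<in> T1 then c1 t y else 0) + (if t \<in> T2 then c2 t y else 0)" for t y
  have "is_germ sc S a (c t)" for t
    unfolding c_def using T1(3) T2(3)
    by (intro is_germ_add; cases "t \<in> T1"; cases "t \<in> T2") (simp_all add: is_germ_const)
  moreover have "(\<Sum>t\<in>T1 \<union> T2. c t y * t y) = (\<Sum>t\<in>T1. c1 t y * t y) + (\<Sum>t\<in>T2. c2 t y * t y)" for y
  proof -
    have "(\<Sum>t\<in>T1 \<union> T2. c t y * t y) = (\<Sum>t\<in>T1 \<union> T2. if t \<in> T1 then c1 t y * t y else 0)
        + (\<Sum>t\<in>T1 \<union> T2. if t \<in> T2 then c2 t y * t y else 0)"
      unfolding sum.distrib[symmetric] c_def by (intro sum.cong) (auto simp: distrib_right)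
    also have "\<dots> = (\<Sum>t\<in>T1. c1 t y * t y) + (\<Sum>t\<in>T2. c2 t y * t y)"
      using T1(1) T2(1) by (simp add: sum.inter_restrict[symmetric] Int_absorb1 Int_absorb2)
    finally show ?thesis .
  qed
  ultimately show ?thesis
    using T1 T2 unfolding gen_ideal_def
    by (intro CollectI exI[of _ "T1 \<union> T2"] exI[of _ c] conjI exI[of _ "U1 \<inter> U2"]) auto
qed

lemma gen_ideal_minimal:
  assumes "G \<subseteq> gen_ideal sc S a G'"
  shows "gen_ideal sc S a G \<subseteq> gen_ideal sc S a G'"
proof
  fix h assume "h \<in> gen_ideal sc S a G"
  then obtain T c U where T: "finite T" "T \<subseteq> G" "\<forall>t\<in>T. is_germ sc S a (c t)"
    "open U" "a \<in> U" "\<forall>y\<in>S \<inter> U. h y = (\<Sum>t\<in>T. c t y * t y)"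
    unfolding gen_ideal_def by blast
  have "(\<lambda>y. \<Sum>t\<in>T. c t y * t y) \<in> gen_ideal sc S a G'"
    using T(1-3)
  proof (induction T rule: finite_induct)
    case empty
    show ?case using gen_ideal_zero by simp
  next
    case (insert t T)
    then have "(\<lambda>y. c t y * t y + (\<Sum>t\<in>T. c t y * t y)) \<in> gen_ideal sc S a G'"
      using assms by (intro gen_ideal_add gen_ideal_mult) auto
    with insert.hyps show ?case by simp
  qed
  then show "h \<in> gen_ideal sc S a G'"
    using T(4-6) by (rule gen_ideal_local_cong)
qed

definition leibniz_det :: "('r \<Rightarrow> 'c \<Rightarrow> 'e::comm_ring_1) \<Rightarrow> 'r list \<Rightarrow> 'c list \<Rightarrow> 'e" where
  "leibniz_det A xs ys = (\<Sum>\<sigma> | \<sigma> permutes {..<length xs}.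
     of_int (sign \<sigma>) * (\<Prod>i<length xs. A (xs ! i) (ys ! \<sigma> i)))"

lemma minor_eq_leibniz_det: "minor A I J = leibniz_det A (enum_set I) (enum_set J)"
  unfolding minor_def leibniz_det_def Let_def ..

lemma leibniz_det_map_cols:
  assumes "length ys = length xs"
  shows "leibniz_det (\<lambda>a c. A a (f c)) xs ys = leibniz_det A xs (map f ys)"
  unfolding leibniz_det_def
proof (intro sum.cong refl arg_cong2[where f = "(*)"] prod.cong)
  fix \<sigma> i assume "\<sigma> \<in> {\<sigma>. \<sigma> permutes {..<length xs}}" "i \<in> {..<length xs}"
  then have "\<sigma> i < length ys"
    using assms permutes_in_image by fastforce
  then show "A (xs ! i) (f (ys ! \<sigma> i)) = A (xs ! i) (map f ys ! \<sigma> i)"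
    by simp
qed

lemma leibniz_det_scale_cols:
  assumes "length ys = length xs"
  shows "leibniz_det (\<lambda>a c. s c * A a c) xs ys = (\<Prod>i<length xs. s (ys ! i)) * leibniz_det A xs ys"
  unfolding leibniz_det_def sum_distrib_left
proof (intro sum.cong refl)
  fix \<sigma> assume "\<sigma> \<in> {\<sigma>. \<sigma> permutes {..<length xs}}"
  then have "(\<Prod>i<length xs. s (ys ! \<sigma> i)) = (\<Prod>i<length xs. s (ys ! i))"
    using prod.reindex_bij_betw[OF permutes_imp_bij] by simp
  then show "of_int (sign \<sigma>) * (\<Prod>i<length xs. s (ys ! \<sigma> i) * A (xs ! i) (ys ! \<sigma> i)) =
    (\<Prod>i<length xs. s (ys ! i)) * (of_int (sign \<sigma>) * (\<Prod>i<length xs. A (xs ! i) (ys ! \<sigma> i)))"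
    by (simp add: prod.distrib)
qed

lemma leibniz_det_permute_cols:
  assumes "length ys = length xs" "\<tau> permutes {..<length xs}"
  shows "leibniz_det A xs (permute_list \<tau> ys) = of_int (sign \<tau>) * leibniz_det A xs ys"
proof -
  let ?P = "{\<sigma>. \<sigma> permutes {..<length xs}}"
  let ?t = "\<lambda>zs \<sigma>. of_int (sign \<sigma>) * (\<Prod>i<length xs. A (xs ! i) (zs ! \<sigma> i))"
  have "leibniz_det A xs (permute_list \<tau> ys) = (\<Sum>\<sigma>\<in>?P. ?t (permute_list \<tau> ys) (inv \<tau> \<circ> \<sigma>))"
    unfolding leibniz_det_def using permutes_inv[OF assms(2)] by (rule setum_permutations_compose_left)
  also have "\<dots> = (\<Sum>\<sigma>\<in>?P. of_int (sign \<tau>) * ?t ys \<sigma>)"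
  proof (intro sum.cong refl)
    fix \<sigma> assume "\<sigma> \<in> ?P"
    then have \<sigma>: "\<sigma> permutes {..<length xs}" by simp
    have "sign (inv \<tau> \<circ> \<sigma>) = sign (inv \<tau>) * sign \<sigma>"
      using permutes_inv[OF assms(2)] \<sigma> by (intro sign_compose) (auto intro: permutes_imp_permutation)
    also have "sign (inv \<tau>) = sign \<tau>"
      using assms(2) by (intro sign_inverse) (auto intro: permutes_imp_permutation)
    finally have "sign (inv \<tau> \<circ> \<sigma>) = sign \<tau> * sign \<sigma>" .
    moreover have "permute_list \<tau> ys ! inv \<tau> (\<sigma> i) = ys ! \<sigma> i" if "i < length xs" for i
      using assms that permutes_in_image[OF \<sigma>] permutes_in_image[OF permutes_inv[OF assms(2)]]
      by (simp add: permute_list_nth permutes_inverses)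
    then have "(\<Prod>i<length xs. A (xs ! i) (permute_list \<tau> ys ! (inv \<tau> \<circ> \<sigma>) i))
        = (\<Prod>i<length xs. A (xs ! i) (ys ! \<sigma> i))"
      by (intro prod.cong) auto
    ultimately show "?t (permute_list \<tau> ys) (inv \<tau> \<circ> \<sigma>) = of_int (sign \<tau>) * ?t ys \<sigma>"
      by simp
  qed
  also have "\<dots> = of_int (sign \<tau>) * leibniz_det A xs ys"
    unfolding leibniz_det_def by (simp add: sum_distrib_left)
  finally show ?thesis .
qed

text \<open>Characteristic 0 is assumed because the transposition argument only yields D = - D.\<close>

lemma leibniz_det_repeated_col:
  fixes A :: "'r \<Rightarrow> 'c \<Rightarrow> 'e::{idom, ring_char_0}"
  assumes "length ys = length xs" "\<not> distinct ys"
  shows "leibniz_det A xs ys = 0"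
proof -
  obtain i j where ij: "i < length xs" "j < length xs" "i \<noteq> j" "ys ! i = ys ! j"
    using assms by (auto simp: distinct_conv_nth)
  let ?\<tau> = "Transposition.transpose i j"
  have \<tau>: "?\<tau> permutes {..<length xs}"
    using ij by (simp add: permutes_swap_id)
  have "ys ! ?\<tau> b = ys ! b" for b
    using ij(4) by (cases "b = i"; cases "b = j") simp_all
  then have "permute_list ?\<tau> ys = ys"
    using assms(1) by (intro nth_equalityI) (simp_all add: permute_list_nth[OF \<tau>[folded assms(1)]])
  then have "leibniz_det A xs ys = - leibniz_det A xs ys"
    using leibniz_det_permute_cols[OF assms(1) \<tau>, of A] ij(3) by (simp add: sign_swap_id)
  then have "2 * leibniz_det A xs ys = 0"
    unfolding mult_2 by (simp only: eq_neg_iff_add_eq_0)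
  then show ?thesis by simp
qed

lemma
  assumes "finite S"
  shows distinct_enum_set: "distinct (enum_set S)" and set_enum_set: "set (enum_set S) = S"
proof -
  have "\<exists>xs. distinct xs \<and> set xs = S"
    using finite_distinct_list[OF assms] by blast
  from someI_ex[OF this] show "distinct (enum_set S)" "set (enum_set S) = S"
    unfolding enum_set_def by simp_all
qed

lemma length_enum_set: "finite S \<Longrightarrow> length (enum_set S) = card S"
  by (metis distinct_card distinct_enum_set set_enum_set)

lemma minor_scale_cols:
  assumes "finite K" "finite L" "card K = card L"
  shows "minor (\<lambda>a c. s c * A a c) K L = (\<Prod>c\<in>L. s c) * minor A K L"
proof -
  have len: "length (enum_set L) = length (enum_set K)"
    using assms by (simp add: length_enum_set)
  then have "bij_betw ((!) (enum_set L)) {..<length (enum_set K)} L"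
    using assms(2) by (intro bij_betw_nth) (simp_all add: distinct_enum_set set_enum_set)
  then have "(\<Prod>i<length (enum_set K). s (enum_set L ! i)) = (\<Prod>c\<in>L. s c)"
    by (rule prod.reindex_bij_betw)
  with len show ?thesis
    by (simp add: minor_eq_leibniz_det leibniz_det_scale_cols)
qed

lemma minor_comp_cols_not_inj:
  fixes A :: "'r \<Rightarrow> 'c \<Rightarrow> 'e::{idom, ring_char_0}"
  assumes "finite K" "finite L" "card K = card L" "\<not> inj_on f L"
  shows "minor (\<lambda>a c. A a (f c)) K L = 0"
  using assms
  by (simp add: minor_eq_leibniz_det leibniz_det_map_cols leibniz_det_repeated_col length_enum_set
      distinct_map set_enum_set)

lemma minor_comp_cols_inj:
  assumes "finite K" "finite L" "card K = card L" "inj_on f L"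
  obtains \<epsilon> :: int where "\<And>A. minor (\<lambda>a c. A a (f c)) K L = of_int \<epsilon> * minor A K (f ` L)"
proof -
  let ?xs = "enum_set K" and ?ys = "enum_set L" and ?zs = "enum_set (f ` L)"
  have "distinct (map f ?ys)" "distinct ?zs" "set (map f ?ys) = set ?zs"
    using assms by (simp_all add: distinct_map distinct_enum_set set_enum_set)
  then have "mset (map f ?ys) = mset ?zs"
    using set_eq_iff_mset_eq_distinct by blast
  then obtain \<tau> where \<tau>: "\<tau> permutes {..<length ?zs}" "permute_list \<tau> ?zs = map f ?ys"
    by (rule mset_eq_permutation)
  have len: "length ?zs = length ?xs" "length ?ys = length ?xs"
    using assms by (simp_all add: length_enum_set card_image)
  have "minor (\<lambda>a c. A a (f c)) K L = of_int (sign \<tau>) * minor A K (f ` L)" for A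
    using \<tau> len by (simp add: minor_eq_leibniz_det leibniz_det_map_cols leibniz_det_permute_cols flip: \<tau>(2))
  then show ?thesis by (rule that)
qed

lemma minor_in_Ik:
  assumes "I \<in> kidx k {..<p}" "J \<in> kidx k {..<r}"
  shows "(\<lambda>z. minor (\<lambda>a j. g a j z) I J) \<in> Ik X x p r g k"
  unfolding Ik_def using assms by (intro gen_ideal_generator) blast

lemma minor_comp_cols_in_Ik:
  assumes "K \<in> kidx k {..<p}" "finite L" "card L = k" "f ` L \<subseteq> {..<r}"
  shows "(\<lambda>z. minor (\<lambda>a c. g a (f c) z) K L) \<in> Ik X x p r g k"
proof -
  have K: "finite K" "card K = card L"
    using assms(1,3) unfolding kidx_def by (auto intro: finite_subset)
  show ?thesis
  proof (cases "inj_on f L")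
    case True
    then obtain \<epsilon> :: int where
      \<epsilon>: "\<And>A :: nat \<Rightarrow> nat \<Rightarrow> complex. minor (\<lambda>a c. A a (f c)) K L = of_int \<epsilon> * minor A K (f ` L)"
      using minor_comp_cols_inj[OF K(1) assms(2) K(2)] by blast
    have "f ` L \<in> kidx k {..<r}"
      using True assms(3,4) by (simp add: kidx_def card_image)
    then have "(\<lambda>z. of_int \<epsilon> * minor (\<lambda>a j. g a j z) K (f ` L)) \<in> Ik X x p r g k"
      using minor_in_Ik[OF assms(1)] unfolding Ik_def by (intro gen_ideal_mult is_germ_const) blast
    moreover have "minor (\<lambda>a c. g a (f c) z) K L = of_int \<epsilon> * minor (\<lambda>a j. g a j z) K (f ` L)" for z
      using \<epsilon>[of "\<lambda>a j. g a j z"] by simp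
    ultimately show ?thesis by simp
  next
    case False
    have "minor (\<lambda>a c. g a (f c) z) K L = 0" for z
      using minor_comp_cols_not_inj[OF K(1) assms(2) K(2) False, of "\<lambda>a j. g a j z"] by simp
    then show ?thesis
      using gen_ideal_zero by (simp add: Ik_def)
  qed
qed

lemma minor_Mtilde_factor:
  assumes "finite K" "finite L" "card K = card L" "card L = Suc m"
  obtains \<phi> i where "\<And>w. minor (\<lambda>a c. Mtilde g a c w) K L =
      (\<Prod>t<m. fst w $ \<phi> t - snd w $ \<phi> t) * (fst w $ i - snd w $ i)
      * minor (\<lambda>a c. g a (snd c) (snd w)) K L"
proof -
  obtain h where h: "bij_betw h {..<Suc m} L"
    using ex_bij_betw_nat_finite[OF assms(2)] assms(4) by (auto simp: atLeast0LessThan)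
  have "minor (\<lambda>a c. Mtilde g a c w) K L =
      (\<Prod>t<m. fst w $ fst (h t) - snd w $ fst (h t)) * (fst w $ fst (h m) - snd w $ fst (h m))
      * minor (\<lambda>a c. g a (snd c) (snd w)) K L" for w
  proof -
    have "minor (\<lambda>a c. Mtilde g a c w) K L =
        (\<Prod>c\<in>L. fst w $ fst c - snd w $ fst c) * minor (\<lambda>a c. g a (snd c) (snd w)) K L"
      unfolding Mtilde_def by (rule minor_scale_cols[OF assms(1-3)])
    also have "(\<Prod>c\<in>L. fst w $ fst c - snd w $ fst c) = (\<Prod>t<Suc m. fst w $ fst (h t) - snd w $ fst (h t))"
      using prod.reindex_bij_betw[OF h, of "\<lambda>c. fst w $ fst c - snd w $ fst c"] by simp
    finally show ?thesis by simp
  qed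
  then show ?thesis by (rule that)
qed

lemma coordinate_diff_tensor_in_IDelta_pow_I2:
  assumes "f \<in> gen_ideal sc_vec X x G" "h \<in> gen_ideal sc_vec X x G"
  shows "(\<lambda>w. f (fst w) * ((\<Prod>t<m. fst w $ \<phi> t - snd w $ \<phi> t) * (fst w $ i - snd w $ i) * h (snd w)))
    \<in> IDelta_pow_I2 X x m (gen_ideal sc_vec X x G)"
proof -
  let ?N = "gen_ideal sc_vec X x G"
  let ?J = "IDelta_pow_I2 X x m ?N"
  define P where "P w = (\<Prod>t<m. fst w $ \<phi> t - snd w $ \<phi> t)" for w :: "(complex^'a) \<times> (complex^'a)"
  define d where "d w = fst w $ i - snd w $ i" for w :: "(complex^'a) \<times> (complex^'a)"
  have two_minor: "(\<lambda>w. P w * (u (fst w) * v (snd w) - u (snd w) * v (fst w))) \<in> ?J"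
    if "u \<in> ?N" "v \<in> ?N" for u v
    unfolding IDelta_pow_I2_def P_def using that by (intro gen_ideal_generator) blast
  have coord: "(\<lambda>z. z $ i * u z) \<in> ?N" if "u \<in> ?N" for u
    using is_germ_coordinate that by (rule gen_ideal_mult)
  define f1 h1 where "f1 z = z $ i * f z" and "h1 z = z $ i * h z" for z
  define E1 E2 E3 where
    "E1 w = P w * (f1 (fst w) * h (snd w) - f1 (snd w) * h (fst w))" and
    "E2 w = P w * (f (fst w) * h1 (snd w) - f (snd w) * h1 (fst w))" and
    "E3 w = P w * (f (fst w) * h (snd w) - f (snd w) * h (fst w))" for w
  have E: "E1 \<in> ?J" "E2 \<in> ?J" "E3 \<in> ?J"
    using two_minor[OF coord[OF assms(1)] assms(2)] two_minor[OF assms(1) coord[OF assms(2)]] two_minor[OF assms]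
    unfolding E1_def E2_def E3_def f1_def h1_def by simp_all
  have "(\<lambda>w. 1/2 * E1 w + (- 1/2 * E2 w + 1/2 * d w * E3 w)) \<in> ?J"
    unfolding d_def IDelta_pow_I2_def
    by (intro gen_ideal_add gen_ideal_mult is_germ_const is_germ_mult is_germ_coordinate_diff
        E[unfolded IDelta_pow_I2_def])
  moreover have "f (fst w) * (P w * d w * h (snd w)) = 1/2 * E1 w + (- 1/2 * E2 w + 1/2 * d w * E3 w)" for w
    unfolding E1_def E2_def E3_def f1_def h1_def d_def by algebra
  ultimately show ?thesis
    unfolding P_def d_def by simp
qed

lemma Mtilde_generator_in_IDelta_pow_I2:
  assumes "I \<in> kidx (Suc m) {..<p}" "J \<in> kidx (Suc m) {..<r}"
    and K: "K \<in> kidx (Suc m) {..<p}" and L: "L \<in> kidx (Suc m) (UNIV \<times> {..<r})"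
  shows "(\<lambda>w. minor (\<lambda>a j. g a j (fst w)) I J * minor (\<lambda>a c. Mtilde g a c w) K L)
    \<in> IDelta_pow_I2 X x m (Ik X x p r g (Suc m))"
proof -
  have fin: "finite K" "finite L" "card K = card L" "card L = Suc m"
    using K L unfolding kidx_def by (auto intro: finite_subset card_ge_0_finite)
  obtain \<phi> i where Mt: "\<And>w. minor (\<lambda>a c. Mtilde g a c w) K L =
      (\<Prod>t<m. fst w $ \<phi> t - snd w $ \<phi> t) * (fst w $ i - snd w $ i)
      * minor (\<lambda>a c. g a (snd c) (snd w)) K L"
    using minor_Mtilde_factor[OF fin] by blast
  have "snd ` L \<subseteq> {..<r}"
    using L unfolding kidx_def by auto
  then have "(\<lambda>z. minor (\<lambda>a c. g a (snd c) z) K L) \<in> Ik X x p r g (Suc m)"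
    using K fin(2,4) by (intro minor_comp_cols_in_Ik)
  with minor_in_Ik[OF assms(1,2)] show ?thesis
    unfolding Mt Ik_def by (rule coordinate_diff_tensor_in_IDelta_pow_I2)
qed

theorem lemma3p4:
  fixes X :: "(complex^'n) set" and x :: "complex^'n"
    and p r k :: nat and g :: "nat \<Rightarrow> nat \<Rightarrow> complex^'n \<Rightarrow> complex"
  assumes "analytic_variety X" and "x \<in> X"
    and "\<forall>a<p. \<forall>j<r. is_germ sc_vec X x (g a j)"
    and "k \<ge> 1"
  shows "I2k_MD X x p r g k \<subseteq> IDelta_pow_I2 X x (k - 1) (Ik X x p r g k)"
proof -
  obtain m where k: "k = Suc m"
    using assms(4) by (cases k) auto
  show ?thesis
    unfolding I2k_MD_def IDelta_pow_I2_def k diff_Suc_1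
    by (rule gen_ideal_minimal)
      (use Mtilde_generator_in_IDelta_pow_I2[unfolded IDelta_pow_I2_def] in blast)
qed

end
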